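(* Let $\beta>0$ and let $S$ be a possible forest with vertex set $\{v_{s_1},\dots,v_{s_k}\}$, $s_1<\dots<s_k$. Then for every $t\ge s_k$, the probability that $S$ is a subgraph of $G^t_{1,\beta}$ is \[ \Pr(S\subset G^t_{1,\beta})=\frac{\beta}{\beta+d_S^{\mathrm{in}}(v_1)}\prod_{\substack{1\le i\le t:\\ v_i\in V^-}}\frac{\Gamma(1+\beta+d_S^{\mathrm{in}}(v_i))}{\Gamma(1+\beta)}\prod_{\substack{1<i\le t:\\ v_i\in V^+}}\frac{1}{(2+\beta)(i-1)-2}\prod_{\substack{1<i\le t:\\ v_i\notin V^+}}\left(1+\frac{c_S(i)}{(2+\beta)(i-1)-2}\right). \]
   Context: Fix a real $\beta>0$ and a positive integer $m$. The random tree process $(G^n_{1,\beta})_{n\ge1}$ is defined as follows. $G^1_{1,\beta}$ consists of a single vertex $v_1$ and no edges. Given $G^n_{1,\beta}$ with vertices $v_1,\dots,v_n$ and directed edges $e_2,\dots,e_n$ (where $e_i$ is the edge whose tail is $v_i$), $G^{n+1}_{1,\beta}$ is obtained by adding a vertex $v_{n+1}$ and a directed edge $e_{n+1}$ with tail $v_{n+1}$ and head a "target vertex" determined by a random variable $f_{n+1}$, independent of $f_2,\dots,f_n$, taking values in $\Omega_{n+1}=\{(i,v):1\le i\le n\}\cup\{(i,h),(i,t):2\le i\le n\}$ with $\Pr(f_{n+1}=(i,v))=\beta/((2+\beta)n-2)$ and $\Pr(f_{n+1}=(i,h))=\Pr(f_{n+1}=(i,t))=1/((2+\beta)n-2)$.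 If $f_{n+1}=(i,v)$ the target is $v_i$ (chosen "uniformly"); if $f_{n+1}=(i,h)$ the target is the head of $e_i$, and if $f_{n+1}=(i,t)$ the target is the tail $v_i$ of $e_i$ (chosen "preferentially", by copying the head half-edge, resp. tail half-edge, of $e_i$). Consequently the target is $v_i$ with probability $(d_n(v_i)+\beta)/((2+\beta)n-2)$, where $d_n(v)$ is the degree of $v$ in $G^n_{1,\beta}$. Each edge is regarded as two half-edges, one at each endpoint; the degree of a vertex is the number of half-edges at it (loops count twice). A possible forest is a directed forest $S$ whose vertices are labelled vertices $v_i$ of the process (identified by their index), with no isolated vertices, in which every vertex has out-degree $0$ or $1$, every edge $(v_i,v_j)$ has $i>j$, and $v_1$ (if present) has out-degree $0$. "$S\subset G^t_{1,\beta}$" means every edge $(v_i,v_j)$ of $S$ is an edge of $G^t_{1,\beta}$ (with labels matching). $d_S^{\mathrm{in}}(v)$ is the in-degree of $v$ in $S$ (taken to be $0$ if $v\notin V(S)$). $V^-=\{v_i\in V(S):\exists j>i,\ (v_j,v_i)\in E(S)\}$, $V^+=\{v_i\in V(S):\exists j<i,\ (v_i,v_j)\in E(S)\}$. For $t\ge i$, $R_t(i)=|\{j>t:(v_j,v_i)\in E(S)\}|$, and $c_S(i)=\sum_{k=1}^{i-1}R_{i-1}(k)$, i.e. the number of edges of $S$ from $\{v_i,v_{i+1},\dots\}$ to $\{v_1,\dots,v_{i-1}\}$. *)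

theory Defs
  imports "HOL-Probability.Probability"
begin

(* Kind of a value of f_{n+1}: (i,v) uniform, (i,h) head of e_i, (i,t) tail of e_i *)
datatype choice_kind = KV | KH | KT

(* A graph G^n of the process is encoded by its head function hf:
   hf i = index of the head of edge e_i (for 2 <= i <= n); other values are 0. *)

definition Omega :: "nat \<Rightarrow> (nat \<times> choice_kind) set" where
  "Omega n = {(i, KV) | i. 1 \<le> i \<and> i \<le> n} \<union> {(i, KH) | i. 2 \<le> i \<and> i \<le> n}
             \<union> {(i, KT) | i. 2 \<le> i \<and> i \<le> n}"

(* weight of outcome of f_{n+1}, i.e. when G^n has n vertices *)
definition f_weight :: "real \<Rightarrow> nat \<Rightarrow> nat \<times> choice_kind \<Rightarrow> real" where
  "f_weight \<beta> n x =
     (if x \<in> Omega n then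
        (case snd x of KV \<Rightarrow> \<beta> / ((2 + \<beta>) * real n - 2)
                     | _ \<Rightarrow> 1 / ((2 + \<beta>) * real n - 2))
      else 0)"

definition f_dist :: "real \<Rightarrow> nat \<Rightarrow> (nat \<times> choice_kind) pmf" where
  "f_dist \<beta> n = embed_pmf (f_weight \<beta> n)"

definition target :: "(nat \<Rightarrow> nat) \<Rightarrow> nat \<times> choice_kind \<Rightarrow> nat" where
  "target hf x = (case x of (i, KV) \<Rightarrow> i | (i, KH) \<Rightarrow> hf i | (i, KT) \<Rightarrow> i)"

definition step :: "real \<Rightarrow> nat \<Rightarrow> (nat \<Rightarrow> nat) \<Rightarrow> (nat \<Rightarrow> nat) pmf" where
  "step \<beta> n hf = map_pmf (\<lambda>x. hf(Suc n := target hf x)) (f_dist \<beta> n)"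

(* tree_proc beta n = distribution of G^n_{1,beta} (n >= 1) *)
fun tree_proc :: "real \<Rightarrow> nat \<Rightarrow> (nat \<Rightarrow> nat) pmf" where
  "tree_proc \<beta> 0 = return_pmf (\<lambda>_. 0)"
| "tree_proc \<beta> (Suc 0) = return_pmf (\<lambda>_. 0)"
| "tree_proc \<beta> (Suc (Suc n)) = tree_proc \<beta> (Suc n) \<bind> step \<beta> (Suc n)"

(* A forest S is a set of directed edges (i,j) meaning (v_i, v_j). *)
definition possible_forest :: "(nat \<times> nat) set \<Rightarrow> bool" where
  "possible_forest S \<longleftrightarrow> finite S \<and> (\<forall>(i, j)\<in>S. 1 \<le> j \<and> j < i)
     \<and> (\<forall>i j j'. (i, j) \<in> S \<longrightarrow> (i, j') \<in> S \<longrightarrow> j = j')"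

definition forest_vertices :: "(nat \<times> nat) set \<Rightarrow> nat set" where
  "forest_vertices S = fst ` S \<union> snd ` S"

definition subgraph_of :: "(nat \<times> nat) set \<Rightarrow> (nat \<Rightarrow> nat) \<Rightarrow> bool" where
  "subgraph_of S hf \<longleftrightarrow> (\<forall>(i, j)\<in>S. hf i = j)"

definition din :: "(nat \<times> nat) set \<Rightarrow> nat \<Rightarrow> nat" where
  "din S v = card {i. (i, v) \<in> S}"

definition Vminus :: "(nat \<times> nat) set \<Rightarrow> nat set" where
  "Vminus S = {i. \<exists>j>i. (j, i) \<in> S}"

definition Vplus :: "(nat \<times> nat) set \<Rightarrow> nat set" where
  "Vplus S = {i. \<exists>j<i. (i, j) \<in> S}"

definition R :: "(nat \<times> nat) set \<Rightarrow> nat \<Rightarrow> nat \<Rightarrow> nat" where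
  "R S t i = card {j. j > t \<and> (j, i) \<in> S}"

definition cS :: "(nat \<times> nat) set \<Rightarrow> nat \<Rightarrow> nat" where
  "cS S i = (\<Sum>k = 1..i - 1. R S (i - 1) k)"

end

theory Submission imports Defs begin

(* Write P_t(S) for the probability that the forest S lies in G^t and F_t(S) for the
   claimed closed form.  The proof is by induction on t, showing that P and F obey the
   same recursion in t.

   We first compute the law of one step f_{n+1}: vertex v_j is
   chosen as target with probability (beta + deg_n v_j)/((2+beta)n-2), where the degree
   is [j >= 2] (the out-edge of v_j) plus the number of edges pointing to v_j.  Hence
   P_{t+1}(S) = P_t(S) if S has no edge leaving v_{t+1}, and for S = S' + (v_{t+1},v_j)
   P_{t+1}(S) is a combination of P_t(S') and of the P_t(S' + (v_i,v_j)), i in (j,t].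

   F_t(S) factors as an in-degree part (Gamma ratios), an out-edge
   part (one factor 1/((2+beta)(i-1)-2) per edge) and a crossing part built from c_S.
   Adding one edge changes each factor in a controlled way, and a telescoping identity
   for products shows that F satisfies the same recursion. *)

section \<open>The law of a single step\<close>

lemma Omega_eq:
  "Omega n = (\<lambda>i. (i, KV)) ` {1..n} \<union> (\<lambda>i. (i, KH)) ` {2..n} \<union> (\<lambda>i. (i, KT)) ` {2..n}"
  by (auto simp: Omega_def)

lemma finite_Omega: "finite (Omega n)"
  by (simp add: Omega_eq)

lemma sum_Omega:
  "(\<Sum>x\<in>Omega n. g x) = (\<Sum>i=1..n. g (i, KV)) + (\<Sum>i=2..n. g (i, KH)) + (\<Sum>i=2..n. g (i, KT))"
proof -
  let ?V = "(\<lambda>i. (i, KV)) ` {1..n}" and ?H = "(\<lambda>i. (i, KH)) ` {2..n}"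
    and ?T = "(\<lambda>i. (i, KT)) ` {2..n}"
  have "(\<Sum>x\<in>Omega n. g x) = (\<Sum>x\<in>?V \<union> ?H. g x) + (\<Sum>x\<in>?T. g x)"
    unfolding Omega_eq by (rule sum.union_disjoint) auto
  also have "(\<Sum>x\<in>?V \<union> ?H. g x) = (\<Sum>x\<in>?V. g x) + (\<Sum>x\<in>?H. g x)"
    by (rule sum.union_disjoint) auto
  finally show ?thesis by (simp add: sum.reindex inj_on_def)
qed

lemma attach_norm_pos:
  assumes "\<beta> > 0" "n \<ge> 1"
  shows "(2 + \<beta>) * real n - 2 > 0"
proof -
  have "(2 + \<beta>) * real n \<ge> 2 + \<beta>"
    using assms mult_left_mono[of 1 "real n" "2 + \<beta>"] by simp
  then show ?thesis using assms(1) by linarith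
qed

lemma f_weight_nonneg: "\<beta> > 0 \<Longrightarrow> n \<ge> 1 \<Longrightarrow> f_weight \<beta> n x \<ge> 0"
  using attach_norm_pos[of \<beta> n] by (auto simp: f_weight_def split: choice_kind.split)

(* The weights are a probability distribution: n uniform choices of weight beta and
   2(n-1) half-edge choices of weight 1. *)
lemma sum_f_weight:
  assumes "\<beta> > 0" "n \<ge> 1"
  shows "(\<Sum>x\<in>Omega n. f_weight \<beta> n x) = 1"
proof -
  let ?D = "(2 + \<beta>) * real n - 2"
  have "(\<Sum>x\<in>Omega n. f_weight \<beta> n x) = real n * (\<beta> / ?D) + 2 * (real (n - 1) * (1 / ?D))"
    unfolding sum_Omega by (simp add: f_weight_def Omega_def)
  also have "\<dots> = ?D / ?D"
    using assms by (simp add: of_nat_diff add_divide_distrib[symmetric] algebra_simps)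
  also have "\<dots> = 1" using attach_norm_pos[OF assms] by simp
  finally show ?thesis .
qed

lemma pmf_f_dist:
  assumes "\<beta> > 0" "n \<ge> 1"
  shows "pmf (f_dist \<beta> n) x = f_weight \<beta> n x" and "set_pmf (f_dist \<beta> n) \<subseteq> Omega n"
proof -
  have nonneg: "\<And>x. f_weight \<beta> n x \<ge> 0" using f_weight_nonneg assms by blast
  have "(\<integral>\<^sup>+x. ennreal (f_weight \<beta> n x) \<partial>count_space UNIV) = (\<Sum>x\<in>Omega n. ennreal (f_weight \<beta> n x))"
    by (rule nn_integral_count_space') (auto simp: finite_Omega f_weight_def)
  also have "\<dots> = 1" using sum_f_weight[OF assms] nonneg by (simp add: sum_ennreal)
  finally have total: "(\<integral>\<^sup>+x. ennreal (f_weight \<beta> n x) \<partial>count_space UNIV) = 1" .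
  show "pmf (f_dist \<beta> n) x = f_weight \<beta> n x"
    unfolding f_dist_def by (rule pmf_embed_pmf[OF nonneg total])
  show "set_pmf (f_dist \<beta> n) \<subseteq> Omega n"
    unfolding f_dist_def set_embed_pmf[OF nonneg total] by (auto simp: f_weight_def split: if_splits)
qed

lemma prob_f_dist:
  assumes "\<beta> > 0" "n \<ge> 1"
  shows "measure_pmf.prob (f_dist \<beta> n) A = (\<Sum>x\<in>Omega n \<inter> A. f_weight \<beta> n x)"
proof -
  have "A \<inter> set_pmf (f_dist \<beta> n) = (Omega n \<inter> A) \<inter> set_pmf (f_dist \<beta> n)"
    using pmf_f_dist(2)[OF assms] by blast
  then have "measure_pmf.prob (f_dist \<beta> n) A = measure_pmf.prob (f_dist \<beta> n) (Omega n \<inter> A)"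
    by (metis measure_Int_set_pmf)
  also have "\<dots> = (\<Sum>x\<in>Omega n \<inter> A. f_weight \<beta> n x)"
    by (simp add: measure_measure_pmf_finite finite_Omega pmf_f_dist(1)[OF assms])
  finally show ?thesis .
qed

lemma prob_target:
  assumes "\<beta> > 0" "n \<ge> 1" "1 \<le> j" "j \<le> n"
  shows "measure_pmf.prob (f_dist \<beta> n) {x. target hf x = j} =
    (\<beta> + (if j \<ge> 2 then 1 else 0) + real (card {i\<in>{2..n}. hf i = j})) / ((2 + \<beta>) * real n - 2)"
proof -
  let ?D = "(2 + \<beta>) * real n - 2"
  have "(\<Sum>x\<in>Omega n \<inter> {x. target hf x = j}. f_weight \<beta> n x)
      = (\<Sum>x\<in>Omega n. if target hf x = j then f_weight \<beta> n x else 0)"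
    by (simp add: sum.inter_restrict finite_Omega)
  also have "\<dots> = (\<Sum>i=1..n. if i = j then \<beta> / ?D else 0)
      + (\<Sum>i=2..n. if hf i = j then 1 / ?D else 0) + (\<Sum>i=2..n. if i = j then 1 / ?D else 0)"
    unfolding sum_Omega target_def
    by (intro arg_cong2[where f = "(+)"] sum.cong) (auto simp: f_weight_def Omega_def)
  also have "(\<Sum>i=1..n. if i = j then \<beta> / ?D else 0) = \<beta> / ?D" using assms by simp
  also have "(\<Sum>i=2..n. if i = j then 1 / ?D else 0) = (if j \<ge> 2 then 1 else 0) / ?D" using assms by simp
  also have "(\<Sum>i=2..n. if hf i = j then 1 / ?D else 0) = real (card {i\<in>{2..n}. hf i = j}) / ?D"
    by (simp add: sum.If_cases Int_def conj_commute)
  finally show ?thesis using prob_f_dist[OF assms(1,2)] by (simp add: add_divide_distrib)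
qed

section \<open>Probability that a forest survives one step of the process\<close>

lemma prob_bind_pmf:
  "measure_pmf.prob (bind_pmf p f) A = (\<integral>x. measure_pmf.prob (f x) A \<partial>p)"
  unfolding measure_pmf_bind
  by (rule measure_pmf.measure_bind[where N = "count_space UNIV"])
     (auto simp: space_subprob_algebra prob_space_imp_subprob_space measure_pmf.prob_space_axioms)

lemma integral_indicator_combination:
  fixes c :: real
  assumes "finite I"
  shows "(\<integral>x. c * indicator A x + (\<Sum>i\<in>I. indicator (B i) x) \<partial>measure_pmf p)
       = c * measure_pmf.prob p A + (\<Sum>i\<in>I. measure_pmf.prob p (B i))"
proof -
  have ind: "integrable (measure_pmf p) (indicator X :: _ \<Rightarrow> real)" for X
    by (simp add: integrable_indicator_iff measure_pmf.emeasure_finite less_top[symmetric])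
  have "(\<integral>x. (\<Sum>i\<in>I. indicator (B i) x :: real) \<partial>measure_pmf p)
      = (\<Sum>i\<in>I. measure_pmf.prob p (B i))"
    by (subst Bochner_Integration.integral_sum) (auto intro: ind)
  then show ?thesis
    by (subst Bochner_Integration.integral_add) (auto intro: ind integrable_mult_right)
qed

lemma tree_proc_Suc: "t \<ge> 1 \<Longrightarrow> tree_proc \<beta> (Suc t) = tree_proc \<beta> t \<bind> step \<beta> t"
  by (cases t) auto

lemma tree_proc_head_less:
  assumes "\<beta> > 0" "t \<ge> 1" "hf \<in> set_pmf (tree_proc \<beta> t)" "2 \<le> i" "i \<le> t"
  shows "hf i < i"
  using assms(2-)
proof (induction t arbitrary: hf i rule: nat_induct_at_least)
  case base
  then show ?case by simp
next
  case (Suc t)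
  from Suc.prems(1) obtain hf0 x where hf0: "hf0 \<in> set_pmf (tree_proc \<beta> t)"
    and x: "x \<in> set_pmf (f_dist \<beta> t)" and hf: "hf = hf0(Suc t := target hf0 x)"
    using Suc.hyps by (auto simp: tree_proc_Suc step_def)
  obtain k c where xk: "x = (k, c)" by force
  have xO: "x \<in> Omega t" using x pmf_f_dist(2)[OF assms(1) Suc.hyps] by blast
  have "target hf0 x \<le> t"
  proof (cases c)
    case KH
    then have "2 \<le> k" "k \<le> t" using xO xk by (auto simp: Omega_def)
    then show ?thesis using Suc.IH[OF hf0, of k] KH xk by (simp add: target_def)
  qed (use xO xk in \<open>auto simp: Omega_def target_def\<close>)
  then show ?case using Suc.IH[OF hf0, of i] Suc.prems hf by (cases "i = Suc t") auto
qed

lemma prob_step_subgraph: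
  "measure_pmf.prob (step \<beta> t hf) {hf'. subgraph_of S hf'} =
   measure_pmf.prob (f_dist \<beta> t) {x. subgraph_of S (hf(Suc t := target hf x))}"
  by (simp add: step_def vimage_def)

lemma prob_subgraph_Suc_no_edge:
  assumes "\<beta> > 0" "t \<ge> 1" "\<forall>(a, b)\<in>S. a \<noteq> Suc t"
  shows "measure_pmf.prob (tree_proc \<beta> (Suc t)) {hf. subgraph_of S hf}
       = measure_pmf.prob (tree_proc \<beta> t) {hf. subgraph_of S hf}"
proof -
  have "subgraph_of S (hf(Suc t := y)) = subgraph_of S hf" for hf y
    using assms(3) unfolding subgraph_of_def by fastforce
  then have "measure_pmf.prob (step \<beta> t hf) {hf'. subgraph_of S hf'} = indicator {hf. subgraph_of S hf} hf"
    for hf by (simp add: prob_step_subgraph)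
  then show ?thesis
    unfolding tree_proc_Suc[OF assms(2)] prob_bind_pmf by simp
qed

lemma prob_step_new_edge:
  assumes "\<beta> > 0" "t \<ge> 1" "\<forall>(a, b)\<in>S. a \<noteq> Suc t" "1 \<le> j" "j \<le> t"
  shows "measure_pmf.prob (step \<beta> t hf) {hf'. subgraph_of (insert (Suc t, j) S) hf'} =
    ((\<beta> + (if j \<ge> 2 then 1 else 0)) * indicator {hf. subgraph_of S hf} hf
     + (\<Sum>i\<in>{2..t}. indicator {hf. subgraph_of S hf \<and> hf i = j} hf)) / ((2 + \<beta>) * real t - 2)"
proof -
  have new: "subgraph_of (insert (Suc t, j) S) (hf(Suc t := y)) \<longleftrightarrow> subgraph_of S hf \<and> y = j" for y
    using assms(3) unfolding subgraph_of_def by fastforce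
  show ?thesis
  proof (cases "subgraph_of S hf")
    case True
    have "real (card {i\<in>{2..t}. hf i = j}) = (\<Sum>i\<in>{2..t}. indicator {hf. subgraph_of S hf \<and> hf i = j} hf)"
      using True by (simp add: indicator_def sum.If_cases Int_def conj_commute)
    then show ?thesis
      using True prob_target[OF assms(1,2,4,5), of hf] by (simp add: prob_step_subgraph new)
  qed (simp add: prob_step_subgraph new indicator_def)
qed

lemma prob_subgraph_Suc_edge:
  assumes "\<beta> > 0" "t \<ge> 1" "\<forall>(a, b)\<in>S. a \<noteq> Suc t" "1 \<le> j" "j \<le> t"
  shows "measure_pmf.prob (tree_proc \<beta> (Suc t)) {hf. subgraph_of (insert (Suc t, j) S) hf} =
    ((\<beta> + (if j \<ge> 2 then 1 else 0)) * measure_pmf.prob (tree_proc \<beta> t) {hf. subgraph_of S hf}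
     + (\<Sum>i\<in>{2..t}. measure_pmf.prob (tree_proc \<beta> t) {hf. subgraph_of S hf \<and> hf i = j}))
    / ((2 + \<beta>) * real t - 2)"
  unfolding tree_proc_Suc[OF assms(2)] prob_bind_pmf prob_step_new_edge[OF assms]
  by (simp add: integral_indicator_combination)

lemma pf_edge: "possible_forest S \<Longrightarrow> (a, b) \<in> S \<Longrightarrow> 1 \<le> b \<and> b < a"
  by (auto simp: possible_forest_def)

lemma pf_finite: "possible_forest S \<Longrightarrow> finite S"
  by (auto simp: possible_forest_def)

lemma pf_insert:
  "possible_forest S \<Longrightarrow> 1 \<le> j \<Longrightarrow> j < i \<Longrightarrow> i \<notin> Vplus S \<Longrightarrow> possible_forest (insert (i, j) S)"
  unfolding possible_forest_def Vplus_def by auto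

lemma Vplus_eq: "possible_forest S \<Longrightarrow> Vplus S = fst ` S"
  by (force simp: Vplus_def dest: pf_edge)

lemma Vminus_eq: "possible_forest S \<Longrightarrow> Vminus S = snd ` S"
  by (force simp: Vminus_def dest: pf_edge)

lemma Vplus_insert: "j < i \<Longrightarrow> Vplus (insert (i, j) S) = insert i (Vplus S)"
  by (auto simp: Vplus_def)

lemma Vminus_insert: "j < i \<Longrightarrow> Vminus (insert (i, j) S) = insert j (Vminus S)"
  by (auto simp: Vminus_def)

lemma finite_in_edges: "finite S \<Longrightarrow> finite {i. (i, k) \<in> S}"
  by (rule finite_subset[of _ "fst ` S"]) force+

lemma din_zero: "possible_forest S \<Longrightarrow> k \<notin> Vminus S \<Longrightarrow> din S k = 0"
  unfolding din_def by (auto simp: Vminus_def pf_finite finite_in_edges dest: pf_edge)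

lemma din_insert:
  assumes "finite S" "(i, j) \<notin> S"
  shows "din (insert (i, j) S) k = din S k + (if k = j then 1 else 0)"
proof (cases "k = j")
  case True
  then have "{a. (a, k) \<in> insert (i, j) S} = insert i {a. (a, k) \<in> S}" by auto
  then show ?thesis using True assms finite_in_edges[OF assms(1)] by (simp add: din_def)
qed (simp add: din_def)

lemma R_insert:
  assumes "finite S" "(i, j) \<notin> S"
  shows "R (insert (i, j) S) n k = R S n k + (if k = j \<and> n < i then 1 else 0)"
proof (cases "k = j \<and> n < i")
  case True
  have "finite {a. n < a \<and> (a, k) \<in> S}"
    by (rule finite_subset[OF _ finite_in_edges[OF assms(1), of k]]) auto
  moreover have "{a. n < a \<and> (a, k) \<in> insert (i, j) S} = insert i {a. n < a \<and> (a, k) \<in> S}"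
    using True by auto
  ultimately show ?thesis using True assms(2) by (simp add: R_def)
next
  case False
  then have "{a. n < a \<and> (a, k) \<in> insert (i, j) S} = {a. n < a \<and> (a, k) \<in> S}" by auto
  then show ?thesis using False by (simp add: R_def)
qed

(* A new edge (v_i, v_j) crosses exactly the cuts {v_m, ...} with j < m <= i. *)
lemma cS_insert:
  assumes "finite S" "(i, j) \<notin> S" "1 \<le> j"
  shows "cS (insert (i, j) S) m = cS S m + (if j < m \<and> m \<le> i then 1 else 0)"
proof -
  have "cS (insert (i, j) S) m
      = (\<Sum>k = 1..m - 1. R S (m - 1) k + (if k = j then (if m - 1 < i then 1 else 0) else 0))"
    unfolding cS_def by (intro sum.cong) (auto simp: R_insert[OF assms(1,2)])
  also have "\<dots> = cS S m + (if j \<in> {1..m - 1} then (if m - 1 < i then 1 else 0) else 0)"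
    unfolding sum.distrib cS_def by (simp add: sum.delta)
  finally show ?thesis using assms(3) by auto
qed

lemma forest_remove_last:
  assumes "possible_forest S" "\<forall>v \<in> forest_vertices S. v \<le> Suc t" "(Suc t, j) \<in> S"
  defines "S' \<equiv> S - {(Suc t, j)}"
  shows "S = insert (Suc t, j) S'" "possible_forest S'" "\<forall>v \<in> forest_vertices S'. v \<le> t"
    "\<forall>(a, b)\<in>S'. a \<noteq> Suc t" "1 \<le> j" "j \<le> t"
proof -
  show "S = insert (Suc t, j) S'" using assms(3) by (auto simp: S'_def)
  show "possible_forest S'" using assms(1) unfolding S'_def possible_forest_def by auto
  show no_last: "\<forall>(a, b)\<in>S'. a \<noteq> Suc t"
    using assms(1,3) by (auto simp: S'_def possible_forest_def)
  have "a \<le> t \<and> b \<le> t" if ab: "(a, b) \<in> S'" for a b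
  proof -
    have "(a, b) \<in> S" using ab by (simp add: S'_def)
    then have "a \<in> forest_vertices S" "b < a"
      using pf_edge[OF assms(1)] by (force simp: forest_vertices_def)+
    then have "a \<le> Suc t" "b < a" using assms(2) by auto
    moreover have "a \<noteq> Suc t" using no_last ab by auto
    ultimately show ?thesis by simp
  qed
  then show "\<forall>v \<in> forest_vertices S'. v \<le> t"
    unfolding forest_vertices_def by auto
  show "1 \<le> j" "j \<le> t" using pf_edge[OF assms(1,3)] by auto
qed

lemma forest_no_last:
  assumes "possible_forest S" "\<forall>v \<in> forest_vertices S. v \<le> Suc t" "\<forall>(a, b)\<in>S. a \<noteq> Suc t"
  shows "\<forall>v \<in> forest_vertices S. v \<le> t"
proof -
  have "a \<le> t \<and> b \<le> t" if ab: "(a, b) \<in> S" for a b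
  proof -
    have "a \<in> forest_vertices S" using ab by (force simp: forest_vertices_def)
    then have "a \<le> Suc t" "b < a" "a \<noteq> Suc t"
      using ab assms pf_edge[OF assms(1)] by auto
    then show ?thesis by simp
  qed
  then show ?thesis unfolding forest_vertices_def by auto
qed

(* The event "S' in G^t and e_i ends at v_j" is again a forest event (or impossible). *)
lemma prob_subgraph_and_head:
  assumes "\<beta> > 0" "t \<ge> 1" "2 \<le> i" "i \<le> t"
  shows "measure_pmf.prob (tree_proc \<beta> t) {hf. subgraph_of S hf \<and> hf i = j} =
    (if (i, j) \<in> S then measure_pmf.prob (tree_proc \<beta> t) {hf. subgraph_of S hf}
     else if i \<le> j \<or> i \<in> Vplus S then 0
     else measure_pmf.prob (tree_proc \<beta> t) {hf. subgraph_of (insert (i, j) S) hf})"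
proof -
  consider "(i, j) \<in> S" | "(i, j) \<notin> S" "i \<le> j" | "(i, j) \<notin> S" "i \<in> Vplus S" "\<not> i \<le> j"
    | "(i, j) \<notin> S" "i \<notin> Vplus S" "\<not> i \<le> j"
    by blast
  then show ?thesis
  proof cases
    case 1
    then have "{hf. subgraph_of S hf \<and> hf i = j} = {hf. subgraph_of S hf}"
      by (auto simp: subgraph_of_def)
    then show ?thesis using 1 by simp
  next
    case 2
    have "{hf. subgraph_of S hf \<and> hf i = j} \<inter> set_pmf (tree_proc \<beta> t) = {}"
      using tree_proc_head_less[OF assms(1,2) _ assms(3,4)] 2 by fastforce
    then show ?thesis using 2 by (metis measure_Int_set_pmf measure_empty)
  next
    case 3
    then obtain j' where "(i, j') \<in> S" "j' \<noteq> j" by (auto simp: Vplus_def)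
    then have "{hf. subgraph_of S hf \<and> hf i = j} = {}" by (auto simp: subgraph_of_def)
    then show ?thesis using 3 by (simp del: Collect_empty_eq)
  next
    case 4
    then have "{hf. subgraph_of S hf \<and> hf i = j} = {hf. subgraph_of (insert (i, j) S) hf}"
      by (auto simp: subgraph_of_def)
    then show ?thesis using 4 by simp
  qed
qed

lemma sum_prob_subgraph_and_head:
  assumes "\<beta> > 0" "t \<ge> 1" "possible_forest S" "\<forall>v \<in> forest_vertices S. v \<le> t" "1 \<le> j"
  shows "(\<Sum>i\<in>{2..t}. measure_pmf.prob (tree_proc \<beta> t) {hf. subgraph_of S hf \<and> hf i = j}) =
     real (din S j) * measure_pmf.prob (tree_proc \<beta> t) {hf. subgraph_of S hf}
     + (\<Sum>i\<in>{j<..t} - Vplus S. measure_pmf.prob (tree_proc \<beta> t) {hf. subgraph_of (insert (i, j) S) hf})"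
proof -
  let ?P = "\<lambda>S. measure_pmf.prob (tree_proc \<beta> t) {hf. subgraph_of S hf}"
  have "(\<Sum>i\<in>{2..t}. measure_pmf.prob (tree_proc \<beta> t) {hf. subgraph_of S hf \<and> hf i = j}) =
     (\<Sum>i\<in>{2..t}. (if (i, j) \<in> S then ?P S else 0)
        + (if (i, j) \<notin> S \<and> \<not> (i \<le> j \<or> i \<in> Vplus S) then ?P (insert (i, j) S) else 0))"
    by (intro sum.cong refl) (simp add: prob_subgraph_and_head[OF assms(1,2)])
  also have "\<dots> = (\<Sum>i\<in>{i\<in>{2..t}. (i, j) \<in> S}. ?P S)
      + (\<Sum>i\<in>{i\<in>{2..t}. (i, j) \<notin> S \<and> \<not> (i \<le> j \<or> i \<in> Vplus S)}. ?P (insert (i, j) S))"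
    unfolding sum.distrib by (simp only: sum.inter_filter finite_atLeastAtMost)
  also have "{i\<in>{2..t}. (i, j) \<in> S} = {i. (i, j) \<in> S}"
    using assms(4,5) pf_edge[OF assms(3)] by (force simp: forest_vertices_def)
  also have "{i\<in>{2..t}. (i, j) \<notin> S \<and> \<not> (i \<le> j \<or> i \<in> Vplus S)} = {j<..t} - Vplus S"
    using assms(5) by (auto simp: Vplus_def)
  finally show ?thesis by (simp add: din_def)
qed

section \<open>The closed formula and its recursion\<close>

(* (2+beta)(i-1) - 2 normalises the attachment law of vertex v_i. *)
definition attach_norm :: "real \<Rightarrow> nat \<Rightarrow> real" where
  "attach_norm \<beta> i = (2 + \<beta>) * real (i - 1) - 2"

definition gamma_ratio :: "real \<Rightarrow> nat \<Rightarrow> real" where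
  "gamma_ratio \<beta> d = Gamma (1 + \<beta> + real d) / Gamma (1 + \<beta>)"

definition indeg_factor :: "real \<Rightarrow> (nat \<times> nat) set \<Rightarrow> real" where
  "indeg_factor \<beta> S = \<beta> / (\<beta> + real (din S 1)) * (\<Prod>i \<in> Vminus S. gamma_ratio \<beta> (din S i))"

definition outedge_factor :: "real \<Rightarrow> (nat \<times> nat) set \<Rightarrow> real" where
  "outedge_factor \<beta> S = (\<Prod>i \<in> Vplus S. 1 / attach_norm \<beta> i)"

definition crossing_factor :: "real \<Rightarrow> (nat \<times> nat) set \<Rightarrow> nat \<Rightarrow> real" where
  "crossing_factor \<beta> S t = (\<Prod>i \<in> {2..t} - Vplus S. 1 + real (cS S i) / attach_norm \<beta> i)"

definition forest_formula :: "real \<Rightarrow> (nat \<times> nat) set \<Rightarrow> nat \<Rightarrow> real" where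
  "forest_formula \<beta> S t = \<beta> / (\<beta> + real (din S 1))
      * (\<Prod>i \<in> {1..t} \<inter> Vminus S. Gamma (1 + \<beta> + real (din S i)) / Gamma (1 + \<beta>))
      * (\<Prod>i \<in> {2..t} \<inter> Vplus S. 1 / ((2 + \<beta>) * real (i - 1) - 2))
      * (\<Prod>i \<in> {2..t} - Vplus S. 1 + real (cS S i) / ((2 + \<beta>) * real (i - 1) - 2))"

lemma forest_formula_factors:
  assumes "possible_forest S" "\<forall>v \<in> forest_vertices S. v \<le> t"
  shows "forest_formula \<beta> S t = indeg_factor \<beta> S * outedge_factor \<beta> S * crossing_factor \<beta> S t"
proof -
  have "{1..t} \<inter> Vminus S = Vminus S"
    using assms pf_edge[OF assms(1)] by (force simp: Vminus_eq forest_vertices_def)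
  moreover have "{2..t} \<inter> Vplus S = Vplus S"
    using assms pf_edge[OF assms(1)] by (force simp: Vplus_eq forest_vertices_def)
  ultimately show ?thesis
    by (simp add: forest_formula_def indeg_factor_def outedge_factor_def crossing_factor_def
        attach_norm_def gamma_ratio_def mult.assoc)
qed

lemma gamma_ratio_0: "\<beta> > 0 \<Longrightarrow> gamma_ratio \<beta> 0 = 1"
proof -
  assume "\<beta> > 0"
  then have "Gamma (1 + \<beta>) > 0" by (intro Gamma_real_pos) simp
  then show ?thesis by (simp add: gamma_ratio_def)
qed

lemma gamma_ratio_Suc:
  assumes "\<beta> > 0"
  shows "gamma_ratio \<beta> (Suc d) = gamma_ratio \<beta> d * (1 + \<beta> + real d)"
proof -
  have "Gamma (1 + \<beta> + real (Suc d)) = Gamma ((1 + \<beta> + real d) + 1)"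
    by (simp add: algebra_simps)
  also have "\<dots> = (1 + \<beta> + real d) * Gamma (1 + \<beta> + real d)"
    using assms by (intro Gamma_plus1) (auto elim!: nonpos_Ints_cases)
  finally show ?thesis by (simp add: gamma_ratio_def)
qed

(* A new edge into v_j raises its in-degree d by one and so multiplies the Gamma product
   by 1 + beta + d. *)
lemma prod_gamma_ratio_insert:
  assumes "\<beta> > 0" "possible_forest S" "j < i" "(i, j) \<notin> S"
  shows "(\<Prod>k \<in> Vminus (insert (i, j) S). gamma_ratio \<beta> (din (insert (i, j) S) k))
       = (\<Prod>k \<in> Vminus S. gamma_ratio \<beta> (din S k)) * (1 + \<beta> + real (din S j))"
proof -
  let ?g = "\<lambda>k. gamma_ratio \<beta> (din S k)"
  have finV: "finite (Vminus S)" using Vminus_eq[OF assms(2)] pf_finite[OF assms(2)] by simp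
  note din' = din_insert[OF pf_finite[OF assms(2)] assms(4)]
  have "(\<Prod>k \<in> Vminus S - {j}. gamma_ratio \<beta> (din (insert (i, j) S) k)) = (\<Prod>k \<in> Vminus S - {j}. ?g k)"
    by (intro prod.cong refl) (simp add: din')
  then have new: "(\<Prod>k \<in> Vminus (insert (i, j) S). gamma_ratio \<beta> (din (insert (i, j) S) k))
      = ?g j * (1 + \<beta> + real (din S j)) * (\<Prod>k \<in> Vminus S - {j}. ?g k)"
    unfolding Vminus_insert[OF assms(3)] using finV assms(1)
    by (simp add: prod.insert_remove din' gamma_ratio_Suc)
  have old: "(\<Prod>k \<in> Vminus S. ?g k) = ?g j * (\<Prod>k \<in> Vminus S - {j}. ?g k)"
  proof (cases "j \<in> Vminus S")
    case True then show ?thesis using finV by (simp add: prod.remove)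
  next
    case False then show ?thesis using din_zero[OF assms(2) False] gamma_ratio_0[OF assms(1)] by simp
  qed
  show ?thesis unfolding new old by simp
qed

(* Adding an edge into v_j multiplies the in-degree factor by beta + deg(v_j), the degree
   counting the out-edge of v_j itself when j >= 2 (v_1 has none, whence the prefactor). *)
lemma indeg_factor_insert:
  assumes "\<beta> > 0" "possible_forest S" "1 \<le> j" "j < i" "(i, j) \<notin> S"
  shows "indeg_factor \<beta> (insert (i, j) S)
       = indeg_factor \<beta> S * (\<beta> + (if j \<ge> 2 then 1 else 0) + real (din S j))"
proof -
  have din1: "din (insert (i, j) S) 1 = din S 1 + (if j = 1 then 1 else 0)"
    using din_insert[OF pf_finite[OF assms(2)] assms(5)] by auto
  have pos: "\<beta> + real (din S 1) > 0" "1 + \<beta> + real (din S 1) > 0" using assms(1) by auto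
  show ?thesis
  proof (cases "j = 1")
    case True
    then show ?thesis using pos
      unfolding indeg_factor_def prod_gamma_ratio_insert[OF assms(1,2,4,5)] din1
      by (simp add: field_simps)
  next
    case False
    then show ?thesis using assms(3)
      unfolding indeg_factor_def prod_gamma_ratio_insert[OF assms(1,2,4,5)] din1
      by (simp add: algebra_simps add_divide_distrib)
  qed
qed

lemma outedge_factor_insert:
  assumes "possible_forest S" "j < i" "i \<notin> Vplus S"
  shows "outedge_factor \<beta> (insert (i, j) S) = outedge_factor \<beta> S / attach_norm \<beta> i"
proof -
  have "finite (Vplus S)" using Vplus_eq[OF assms(1)] pf_finite[OF assms(1)] by simp
  then show ?thesis unfolding outedge_factor_def Vplus_insert[OF assms(2)] using assms(3) by simp
qed

(* Telescoping: switching the factors a m to b m one by one for j < m <= t.  This is the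
   algebraic identity behind the recursion of the crossing factor. *)
lemma prod_switch_telescope:
  fixes a b :: "nat \<Rightarrow> real"
  assumes "finite M" "j \<le> t"
  shows "(\<Prod>m\<in>M. if j < m \<and> m \<le> t then b m else a m) = (\<Prod>m\<in>M. a m)
     + (\<Sum>i\<in>{j<..t} \<inter> M. (b i - a i) * (\<Prod>m\<in>M - {i}. if j < m \<and> m < i then b m else a m))"
  using assms(2)
proof (induction t rule: dec_induct)
  case base
  have "(\<Prod>m\<in>M. if j < m \<and> m \<le> j then b m else a m) = (\<Prod>m\<in>M. a m)"
    by (intro prod.cong) auto
  then show ?case by simp
next
  case (step k)
  let ?switched = "\<lambda>n m. if j < m \<and> m \<le> n then b m else a m"
  show ?case
  proof (cases "Suc k \<in> M")
    case True
    define X where "X = (\<Prod>m\<in>M - {Suc k}. if j < m \<and> m < Suc k then b m else a m)"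
    have rest: "(\<Prod>m\<in>M - {Suc k}. ?switched n m) = X" if "n = k \<or> n = Suc k" for n
      unfolding X_def using that by (intro prod.cong) auto
    have "(\<Prod>m\<in>M. ?switched (Suc k) m) = b (Suc k) * X" "(\<Prod>m\<in>M. ?switched k m) = a (Suc k) * X"
      using True assms(1) step.hyps rest by (simp_all add: prod.remove)
    moreover have "{j<..Suc k} \<inter> M = insert (Suc k) ({j<..k} \<inter> M)"
      using True step.hyps by (auto simp: le_Suc_eq)
    ultimately show ?thesis using step.IH by (simp add: X_def algebra_simps)
  next
    case False
    have "(\<Prod>m\<in>M. ?switched (Suc k) m) = (\<Prod>m\<in>M. ?switched k m)"
      using False by (intro prod.cong refl) (auto simp: le_Suc_eq)
    moreover have "{j<..Suc k} \<inter> M = {j<..k} \<inter> M"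
      using False by (auto simp: le_Suc_eq)
    ultimately show ?thesis using step.IH by simp
  qed
qed

lemma crossing_factor_insert:
  assumes "possible_forest S" "(i, j) \<notin> S" "1 \<le> j" "j < i"
  shows "crossing_factor \<beta> (insert (i, j) S) t = (\<Prod>m\<in>({2..t} - Vplus S) - {i}.
     if j < m \<and> m < i then 1 + (real (cS S m) + 1) / attach_norm \<beta> m
     else 1 + real (cS S m) / attach_norm \<beta> m)"
proof -
  have "{2..t} - Vplus (insert (i, j) S) = ({2..t} - Vplus S) - {i}"
    using assms(4) by (auto simp: Vplus_insert)
  then show ?thesis unfolding crossing_factor_def
    by (intro prod.cong) (auto simp: cS_insert[OF pf_finite[OF assms(1)] assms(2,3)])
qed

(* A forest on v_1..v_t has no edge crossing into v_{t+1}, so its crossing factor does not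
   change from t to t+1. *)
lemma crossing_factor_Suc:
  assumes "possible_forest S" "\<forall>v \<in> forest_vertices S. v \<le> t" "t \<ge> 1"
  shows "crossing_factor \<beta> S (Suc t) = crossing_factor \<beta> S t"
proof -
  have edge_le: "a \<le> t" if "(a, b) \<in> S" for a b
    using that assms(2) by (force simp: forest_vertices_def)
  then have "Suc t \<notin> Vplus S" by (force simp: Vplus_def)
  then have "{2..Suc t} - Vplus S = insert (Suc t) ({2..t} - Vplus S)" using assms(3) by auto
  moreover have "R S t k = 0" for k
  proof -
    have "{a. t < a \<and> (a, k) \<in> S} = {}" using edge_le by force
    then show ?thesis unfolding R_def by (metis card.empty)
  qed
  then have "cS S (Suc t) = 0" by (simp add: cS_def)
  ultimately show ?thesis unfolding crossing_factor_def by simp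
qed

lemma forest_formula_insert:
  assumes "\<beta> > 0" "possible_forest S" "\<forall>v \<in> forest_vertices S. v \<le> t" "1 \<le> j"
    and i: "j < i" "i \<le> t" "i \<notin> Vplus S"
  shows "forest_formula \<beta> (insert (i, j) S) t
       = indeg_factor \<beta> S * (\<beta> + (if j \<ge> 2 then 1 else 0) + real (din S j))
         * (outedge_factor \<beta> S / attach_norm \<beta> i) * (\<Prod>m\<in>({2..t} - Vplus S) - {i}.
           if j < m \<and> m < i then 1 + (real (cS S m) + 1) / attach_norm \<beta> m
           else 1 + real (cS S m) / attach_norm \<beta> m)"
proof -
  have new: "(i, j) \<notin> S" using i by (auto simp: Vplus_def)
  have forest: "possible_forest (insert (i, j) S)" using pf_insert[OF assms(2,4) i(1,3)] .
  have verts: "\<forall>v \<in> forest_vertices (insert (i, j) S). v \<le> t"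
    using assms(3) i by (auto simp: forest_vertices_def)
  show ?thesis
    unfolding forest_formula_factors[OF forest verts] indeg_factor_insert[OF assms(1,2,4) i(1) new]
      outedge_factor_insert[OF assms(2) i(1,3)] crossing_factor_insert[OF assms(2) new assms(4) i(1)]
    by simp
qed

lemma forest_formula_recursion:
  assumes "\<beta> > 0" "t \<ge> 1" "possible_forest S" "\<forall>v \<in> forest_vertices S. v \<le> t" "1 \<le> j" "j \<le> t"
  shows "forest_formula \<beta> (insert (Suc t, j) S) (Suc t) =
    ((\<beta> + (if j \<ge> 2 then 1 else 0) + real (din S j)) * forest_formula \<beta> S t
     + (\<Sum>i\<in>{j<..t} - Vplus S. forest_formula \<beta> (insert (i, j) S) t)) / ((2 + \<beta>) * real t - 2)"
proof -
  let ?w = "\<beta> + (if j \<ge> 2 then 1 else 0) + real (din S j)"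
  let ?M = "{2..t} - Vplus S" and ?I = "{j<..t} - Vplus S"
  let ?a = "\<lambda>m. 1 + real (cS S m) / attach_norm \<beta> m"
  let ?b = "\<lambda>m. 1 + (real (cS S m) + 1) / attach_norm \<beta> m"
  let ?c = "indeg_factor \<beta> S * ?w * outedge_factor \<beta> S"
  have verts_Suc: "\<forall>v \<in> forest_vertices S. v \<le> Suc t" using assms(4) by auto
  have last_free: "Suc t \<notin> Vplus S" using assms(4) by (force simp: forest_vertices_def Vplus_def)
  have M_Suc: "({2..Suc t} - Vplus S) - {Suc t} = ?M" by auto
  have lhs: "forest_formula \<beta> (insert (Suc t, j) S) (Suc t)
      = ?c / attach_norm \<beta> (Suc t) * (\<Prod>m\<in>?M. if j < m \<and> m \<le> t then ?b m else ?a m)"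
    using forest_formula_insert[OF assms(1,3) verts_Suc assms(5), of "Suc t"] assms(6) last_free
    unfolding M_Suc by (simp add: less_Suc_eq_le)
  have old: "forest_formula \<beta> S t = indeg_factor \<beta> S * outedge_factor \<beta> S * (\<Prod>m\<in>?M. ?a m)"
    unfolding forest_formula_factors[OF assms(3,4)] crossing_factor_def ..
  have inner: "forest_formula \<beta> (insert (i, j) S) t
      = ?c * ((?b i - ?a i) * (\<Prod>m\<in>?M - {i}. if j < m \<and> m < i then ?b m else ?a m))"
    if "i \<in> ?I" for i
    using forest_formula_insert[OF assms(1,3,4,5), of i] that by (simp add: add_divide_distrib)
  have "?I = {j<..t} \<inter> ?M" using assms(5) by auto
  then have telescope: "(\<Prod>m\<in>?M. if j < m \<and> m \<le> t then ?b m else ?a m) = (\<Prod>m\<in>?M. ?a m)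
      + (\<Sum>i\<in>?I. (?b i - ?a i) * (\<Prod>m\<in>?M - {i}. if j < m \<and> m < i then ?b m else ?a m))"
    using prod_switch_telescope[of ?M j t ?b ?a] assms(6) by simp
  have sum_inner: "(\<Sum>i\<in>?I. forest_formula \<beta> (insert (i, j) S) t)
      = ?c * (\<Sum>i\<in>?I. (?b i - ?a i) * (\<Prod>m\<in>?M - {i}. if j < m \<and> m < i then ?b m else ?a m))"
    unfolding sum_distrib_left by (rule sum.cong[OF refl inner])
  have norm: "(2 + \<beta>) * real t - 2 = attach_norm \<beta> (Suc t)" by (simp add: attach_norm_def)
  have "?c / D * (X + Y) = (?w * (indeg_factor \<beta> S * outedge_factor \<beta> S * X) + ?c * Y) / D"
    for D X Y :: real
    by (simp add: algebra_simps add_divide_distrib)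
  then show ?thesis unfolding lhs old telescope sum_inner norm .
qed

section \<open>The subgraph probability\<close>

(* Induction on t: both sides agree on G^1 (only the empty forest fits), and both obey the
   same recursion from t to t+1. *)
lemma prob_subgraph_eq_forest_formula:
  assumes "\<beta> > 0" "t \<ge> 1" "possible_forest S" "\<forall>v \<in> forest_vertices S. v \<le> t"
  shows "measure_pmf.prob (tree_proc \<beta> t) {hf. subgraph_of S hf} = forest_formula \<beta> S t"
  using assms(2-)
proof (induction t arbitrary: S rule: nat_induct_at_least)
  case base
  have "S = {}"
  proof (rule ccontr)
    assume "S \<noteq> {}"
    then obtain a b where ab: "(a, b) \<in> S" by auto
    then have "a \<in> forest_vertices S" by (force simp: forest_vertices_def)
    then show False using base pf_edge[OF base(1) ab] by auto
  qed
  then show ?case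
    using assms(1) by (simp add: subgraph_of_def forest_formula_def din_def Vminus_def Vplus_def)
next
  case (Suc t)
  let ?P = "\<lambda>S. measure_pmf.prob (tree_proc \<beta> t) {hf. subgraph_of S hf}"
  show ?case
  proof (cases "\<exists>j. (Suc t, j) \<in> S")
    case False
    then have no_last: "\<forall>(a, b)\<in>S. a \<noteq> Suc t" by auto
    note verts = forest_no_last[OF Suc.prems no_last]
    show ?thesis
      unfolding prob_subgraph_Suc_no_edge[OF assms(1) Suc.hyps no_last] Suc.IH[OF Suc.prems(1) verts]
        forest_formula_factors[OF Suc.prems] forest_formula_factors[OF Suc.prems(1) verts]
        crossing_factor_Suc[OF Suc.prems(1) verts Suc.hyps] ..
  next
    case True
    then obtain j where last_edge: "(Suc t, j) \<in> S" by blast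
    define S' where "S' = S - {(Suc t, j)}"
    note split = forest_remove_last[OF Suc.prems last_edge, folded S'_def]
    note S_eq = split(1) and forest' = split(2) and verts' = split(3) and no_last = split(4)
      and j = split(5,6)
    have IH: "(\<Sum>i\<in>{j<..t} - Vplus S'. ?P (insert (i, j) S'))
        = (\<Sum>i\<in>{j<..t} - Vplus S'. forest_formula \<beta> (insert (i, j) S') t)"
      using forest' verts' j by (intro sum.cong refl Suc.IH pf_insert) (auto simp: forest_vertices_def)
    have "measure_pmf.prob (tree_proc \<beta> (Suc t)) {hf. subgraph_of S hf} =
        ((\<beta> + (if j \<ge> 2 then 1 else 0) + real (din S' j)) * ?P S'
         + (\<Sum>i\<in>{j<..t} - Vplus S'. ?P (insert (i, j) S'))) / ((2 + \<beta>) * real t - 2)"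
      unfolding S_eq prob_subgraph_Suc_edge[OF assms(1) Suc.hyps no_last j]
        sum_prob_subgraph_and_head[OF assms(1) Suc.hyps forest' verts' j(1)]
      by (simp add: algebra_simps)
    also have "\<dots> = forest_formula \<beta> S (Suc t)"
      unfolding S_eq Suc.IH[OF forest' verts'] IH
      by (rule forest_formula_recursion[OF assms(1) Suc.hyps forest' verts' j, symmetric])
    finally show ?thesis .
  qed
qed

theorem lemma1:
  fixes \<beta> :: real and S :: "(nat \<times> nat) set" and t :: nat
  assumes "\<beta> > 0"
    and "possible_forest S"
    and "1 \<le> t" and "\<forall>v \<in> forest_vertices S. v \<le> t"
  shows "measure_pmf.prob (tree_proc \<beta> t) {hf. subgraph_of S hf} =
      \<beta> / (\<beta> + real (din S 1))
      * (\<Prod>i \<in> {1..t} \<inter> Vminus S. Gamma (1 + \<beta> + real (din S i)) / Gamma (1 + \<beta>))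
      * (\<Prod>i \<in> {2..t} \<inter> Vplus S. 1 / ((2 + \<beta>) * real (i - 1) - 2))
      * (\<Prod>i \<in> {2..t} - Vplus S. 1 + real (cS S i) / ((2 + \<beta>) * real (i - 1) - 2))"
  using prob_subgraph_eq_forest_formula[OF assms(1,3,2,4)] unfolding forest_formula_def .

end
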